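(* Let $C>0$ and let $(u^k)_{k\ge0}$ be a nonnegative sequence satisfying $u^{k+1}\le-2C+2C\sqrt{1+u^k/C}$ for all $k\ge0$. Then $u^k\le C_2/k$ for all $k\ge1$, where $C_2=\max(8C,\,2\sqrt{C u^0})$. *)

theory Defs
  imports "HOL-Analysis.Analysis"
begin

end

theory Submission
  imports Defs
begin

text \<open>The recursion map \<open>a \<mapsto> -2C + 2C\<surd>(1 + a/C)\<close> is increasing and sends \<open>a\<close> below \<open>b \<ge> 0\<close>
  as soon as \<open>a \<le> b + b\<^sup>2/(4C)\<close>, since this is the inverse map evaluated at \<open>b\<close>. Taking
  \<open>b = 2\<surd>(C a)\<close> bounds the first step by \<open>2\<surd>(C u\<^sub>0)\<close>. Afterwards the bound \<open>M/k\<close> propagates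
  along the recursion because \<open>M/k - M/(k+1) = M/(k(k+1))\<close> is at most \<open>(M/(k+1))\<^sup>2/(4C)\<close>
  exactly when \<open>4C(k+1) \<le> M k\<close>, which \<open>M \<ge> 8C\<close> guarantees for \<open>k \<ge> 1\<close>.\<close>

lemma sqrt_recursion_le:
  fixes C a b :: real
  assumes "C > 0" "0 \<le> a" "0 \<le> b" "a \<le> b + b\<^sup>2 / (4 * C)"
  shows "- 2 * C + 2 * C * sqrt (1 + a / C) \<le> b"
proof -
  have "(1 + b / (2 * C))\<^sup>2 = 1 + (b + b\<^sup>2 / (4 * C)) / C"
    using assms(1) by (simp add: power2_eq_square field_simps)
  also have "\<dots> \<ge> 1 + a / C"
    using assms(1,4) by (simp add: divide_right_mono)
  finally have "sqrt (1 + a / C) \<le> 1 + b / (2 * C)"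
    using assms(1,3) by (intro real_le_lsqrt) auto
  then have "2 * C * sqrt (1 + a / C) \<le> 2 * C + b"
    using assms(1) by (simp add: field_simps)
  then show ?thesis by simp
qed

lemma sqrt_recursion_le_sqrt_mult:
  fixes C a :: real
  assumes "C > 0" "0 \<le> a"
  shows "- 2 * C + 2 * C * sqrt (1 + a / C) \<le> 2 * sqrt (C * a)"
proof (rule sqrt_recursion_le[OF assms])
  have "(2 * sqrt (C * a))\<^sup>2 / (4 * C) = a"
    using assms by (simp add: power_mult_distrib)
  then show "a \<le> 2 * sqrt (C * a) + (2 * sqrt (C * a))\<^sup>2 / (4 * C)"
    using assms by simp
qed (use assms in simp)

lemma inverse_nat_bound_step:
  fixes C M :: real and n :: nat
  assumes "C > 0" "8 * C \<le> M" "1 \<le> n"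
  shows "M / n \<le> M / Suc n + (M / Suc n)\<^sup>2 / (4 * C)"
proof -
  have n: "1 \<le> real n" using assms(3) by simp
  have "4 * C * (real n + 1) \<le> 8 * C * real n"
    using assms(1) n by simp
  also have "\<dots> \<le> M * real n"
    using assms(2) n by (intro mult_right_mono) auto
  finally have "4 * C * (real n + 1) * M \<le> M * real n * M"
    using assms(1,2) by (intro mult_right_mono) auto
  then have "4 * C * (real n + 1) * M / (4 * C * (real n * (real n + 1)\<^sup>2))
      \<le> M * real n * M / (4 * C * (real n * (real n + 1)\<^sup>2))"
    using assms(1) n by (intro divide_right_mono) auto
  then have "M / (real n * (real n + 1)) \<le> (M / (real n + 1))\<^sup>2 / (4 * C)"
    using assms(1) n by (simp add: power2_eq_square mult_ac)
  moreover have "M / real n - M / (real n + 1) = M / (real n * (real n + 1))"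
    using n by (simp add: field_simps)
  ultimately show ?thesis by (simp add: add.commute)
qed

theorem lemma3:
  fixes C :: real and u :: "nat \<Rightarrow> real"
  assumes "C > 0"
    and "\<And>k. u k \<ge> 0"
    and "\<And>k. u (Suc k) \<le> - 2 * C + 2 * C * sqrt (1 + u k / C)"
  shows "\<forall>k\<ge>1. u k \<le> max (8 * C) (2 * sqrt (C * u 0)) / real k"
proof (intro allI impI)
  fix k :: nat
  assume "k \<ge> 1"
  define M where "M = max (8 * C) (2 * sqrt (C * u 0))"
  have "8 * C \<le> M" by (simp add: M_def)
  have "u k \<le> M / k"
    using \<open>k \<ge> 1\<close>
  proof (induction k rule: dec_induct)
    case base
    show ?case
      using assms(3)[of 0] sqrt_recursion_le_sqrt_mult[OF assms(1) assms(2)[of 0]] by (simp add: M_def)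
  next
    case (step n)
    have "u n \<le> M / Suc n + (M / Suc n)\<^sup>2 / (4 * C)"
      using step.IH inverse_nat_bound_step[OF assms(1) \<open>8 * C \<le> M\<close> step.hyps(1)] by linarith
    then show ?case
      using assms(1) \<open>8 * C \<le> M\<close>
      by (intro order_trans[OF assms(3) sqrt_recursion_le[OF assms(1,2)]]) auto
  qed
  then show "u k \<le> max (8 * C) (2 * sqrt (C * u 0)) / real k"
    by (simp add: M_def)
qed

end
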